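(* Let $k\ge 2$ be an integer. For any $k-1$ distinct positive integers $a_1<a_2<\cdots<a_{k-1}$, there exists an index $i$ with $2\left\lfloor\frac{k-1}{3}\right\rfloor\leq a_i\leq a_{k-1}-\left\lfloor\frac{k-1}{3}\right\rfloor$. *)

theory Defs
  imports Main
begin

end

theory Submission
  imports Defs
begin

text \<open>Take the index \<open>i = n - m\<close> with \<open>n = k - 1\<close> and \<open>m = \<lfloor>n/3\<rfloor>\<close>. A strictly increasing
  sequence of positive integers gains at least one per step, so \<open>a i \<ge> i \<ge> 2m\<close>, and the
  \<open>m\<close> further steps up to index \<open>n\<close> give \<open>a i + m \<le> a n\<close>.\<close>

lemma strict_increasing_add_le:
  fixes a :: "nat \<Rightarrow> nat"
  assumes incr: "\<And>i j. i \<in> {1..n} \<Longrightarrow> j \<in> {1..n} \<Longrightarrow> i < j \<Longrightarrow> a i < a j"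
    and "1 \<le> i" and "i + d \<le> n"
  shows "a i + d \<le> a (i + d)"
  using assms(3)
proof (induction d)
  case 0
  then show ?case by simp
next
  case (Suc d)
  then have "a i + d \<le> a (i + d)" by simp
  moreover have "a (i + d) < a (i + Suc d)"
    using Suc.prems \<open>1 \<le> i\<close> by (intro incr) auto
  ultimately show ?case by simp
qed

lemma strict_increasing_pos_ge_index:
  fixes a :: "nat \<Rightarrow> nat"
  assumes incr: "\<And>i j. i \<in> {1..n} \<Longrightarrow> j \<in> {1..n} \<Longrightarrow> i < j \<Longrightarrow> a i < a j"
    and pos: "a 1 > 0" and "i \<in> {1..n}"
  shows "i \<le> a i"
proof -
  have "a 1 + (i - 1) \<le> a (1 + (i - 1))"
    using assms(3) by (intro strict_increasing_add_le[OF incr]) auto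
  then show ?thesis using pos assms(3) by simp
qed

theorem lemma2:
  fixes k :: nat and a :: "nat \<Rightarrow> nat"
  assumes "k \<ge> 2"
    and "\<And>i. i \<in> {1..k-1} \<Longrightarrow> a i > 0"
    and "\<And>i j. i \<in> {1..k-1} \<Longrightarrow> j \<in> {1..k-1} \<Longrightarrow> i < j \<Longrightarrow> a i < a j"
  shows "\<exists>i\<in>{1..k-1}. 2 * ((k - 1) div 3) \<le> a i \<and> int (a i) \<le> int (a (k-1)) - int ((k - 1) div 3)"
proof -
  define n where "n = k - 1"
  define m where "m = n div 3"
  define i where "i = n - m"
  have "3 * m \<le> n" "1 \<le> n" using assms(1) by (simp_all add: m_def n_def)
  then have i_range: "i \<in> {1..k-1}" by (auto simp: i_def n_def)
  have "i \<le> a i"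
    using assms(2,3) i_range n_def \<open>1 \<le> n\<close>
    by (intro strict_increasing_pos_ge_index[of "k-1"]) auto
  moreover have "a i + m \<le> a (i + m)"
    using assms(3) i_range \<open>3 * m \<le> n\<close>
    by (intro strict_increasing_add_le[of "k-1"]) (auto simp: i_def n_def)
  ultimately have "2 * m \<le> a i" "a i + m \<le> a n"
    using \<open>3 * m \<le> n\<close> by (simp_all add: i_def)
  then show ?thesis
    using i_range by (intro bexI[of _ i]) (auto simp: m_def n_def)
qed

end
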